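(* Let $\mathbb{X}$ be a two-dimensional real Banach space, $z\in S_{\mathbb{X}}$ and $\epsilon\in[0,1)$. Then the set $A=\left[\bigcup_{\alpha\in\mathbb{R}}\overline{B}(\alpha z,\epsilon)\right]\cap S_{\mathbb{X}}$ has at most two connected components.
   Context: $\overline{B}(w,\epsilon)=\{u\in\mathbb{X}:\|u-w\|\leq\epsilon\}$ and $S_{\mathbb{X}}$ is the unit sphere of $\mathbb{X}$. *)

theory Defs
  imports "HOL-Analysis.Analysis"
begin

end

theory Submission
  imports Defs
begin

text \<open>Every point \<open>x\<close> of the set is joined inside it to one of the poles \<open>z\<close>, \<open>-z\<close>:
  if \<open>x\<close> is \<open>\<epsilon>\<close>-close to \<open>\<alpha>z\<close> with \<open>\<alpha> > 0\<close>, follow the chord from \<open>x\<close> to \<open>z\<close> and push it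
  radially onto the sphere. Because \<open>x - \<alpha>z\<close> lies in the unit ball, convexity of the norm gives
  \<open>\<parallel>(1 - u)x + uz\<parallel> \<ge> 1 - u\<close>, so normalising the chord point only shrinks its distance
  \<open>(1 - u)\<parallel>x - \<alpha>z\<parallel>\<close> to the line through \<open>z\<close>.\<close>

definition line_thickening :: "'a::real_normed_vector \<Rightarrow> real \<Rightarrow> 'a set" where
  "line_thickening z \<epsilon> = (\<Union>\<alpha>::real. cball (\<alpha> *\<^sub>R z) \<epsilon>)"

lemma line_thickening_uminus: "line_thickening (- z) \<epsilon> = line_thickening z \<epsilon>"
proof -
  have "line_thickening (- z) \<epsilon> = (\<Union>\<alpha>\<in>range uminus. cball (\<alpha> *\<^sub>R z) \<epsilon>)"
    unfolding line_thickening_def by (simp only: image_image scaleR_minus_left scaleR_minus_right)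
  then show ?thesis
    unfolding line_thickening_def by (simp only: surj_uminus)
qed

lemma norm_chord_ge:
  fixes x z :: "'a::real_normed_vector"
  assumes x: "norm x = 1" and close: "norm (x - \<alpha> *\<^sub>R z) \<le> 1" and "\<alpha> > 0"
    and "0 \<le> u" "u \<le> 1"
  shows "1 - u \<le> norm ((1 - u) *\<^sub>R x + u *\<^sub>R z)"
proof -
  have "u + \<alpha> * (1 - u) \<ge> 0"
    using \<open>\<alpha> > 0\<close> \<open>u \<le> 1\<close> \<open>0 \<le> u\<close> by simp
  then have "u + \<alpha> * (1 - u) = norm ((u + \<alpha> * (1 - u)) *\<^sub>R x)"
    using x by simp
  also have "(u + \<alpha> * (1 - u)) *\<^sub>R x = u *\<^sub>R (x - \<alpha> *\<^sub>R z) + \<alpha> *\<^sub>R ((1 - u) *\<^sub>R x + u *\<^sub>R z)"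
    by (simp add: algebra_simps)
  also have "norm \<dots> \<le> norm (u *\<^sub>R (x - \<alpha> *\<^sub>R z)) + norm (\<alpha> *\<^sub>R ((1 - u) *\<^sub>R x + u *\<^sub>R z))"
    by (rule norm_triangle_ineq)
  also have "\<dots> = u * norm (x - \<alpha> *\<^sub>R z) + \<alpha> * norm ((1 - u) *\<^sub>R x + u *\<^sub>R z)"
    using \<open>\<alpha> > 0\<close> \<open>0 \<le> u\<close> by simp
  also have "\<dots> \<le> u + \<alpha> * norm ((1 - u) *\<^sub>R x + u *\<^sub>R z)"
    using close \<open>0 \<le> u\<close> by (simp add: mult_left_le)
  finally have "\<alpha> * (1 - u) \<le> \<alpha> * norm ((1 - u) *\<^sub>R x + u *\<^sub>R z)"
    by linarith
  then show ?thesis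
    using \<open>\<alpha> > 0\<close> by (rule mult_left_le_imp_le)
qed

lemma connected_component_to_pole:
  fixes x z :: "'a::real_normed_vector"
  assumes x: "norm x = 1" and z: "norm z = 1" and close: "norm (x - \<alpha> *\<^sub>R z) \<le> \<epsilon>"
    and "\<epsilon> < 1" and "\<alpha> > 0"
  shows "connected_component (line_thickening z \<epsilon> \<inter> sphere 0 1) x z"
proof -
  define p where "p u = (1 - u) *\<^sub>R x + u *\<^sub>R z" for u :: real
  define g where "g u = (1 / norm (p u)) *\<^sub>R p u" for u
  have chord: "1 - u \<le> norm (p u)" if "0 \<le> u" "u \<le> 1" for u
    unfolding p_def using norm_chord_ge[OF x _ \<open>\<alpha> > 0\<close> that] close \<open>\<epsilon> < 1\<close> by simp
  have p_pos: "norm (p u) > 0" if "0 \<le> u" "u \<le> 1" for u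
  proof (cases "u = 1")
    case True
    then show ?thesis using z by (simp add: p_def)
  next
    case False
    then show ?thesis using chord[OF that] that by linarith
  qed
  have "continuous_on {0..1} g"
    using p_pos unfolding g_def p_def by (intro continuous_intros) auto
  moreover have "g ` {0..1} \<subseteq> line_thickening z \<epsilon> \<inter> sphere 0 1"
  proof clarify
    fix u :: real
    assume "u \<in> {0..1}"
    then have u: "0 \<le> u" "u \<le> 1"
      by auto
    define n where "n = norm (p u)"
    have n: "n > 0" "1 - u \<le> n"
      using p_pos[OF u] chord[OF u] by (simp_all add: n_def)
    define \<beta> where "\<beta> = ((1 - u) * \<alpha> + u) / n"
    have "p u - ((1 - u) * \<alpha> + u) *\<^sub>R z = (1 - u) *\<^sub>R (x - \<alpha> *\<^sub>R z)"
      by (simp add: p_def algebra_simps)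
    moreover have "g u - \<beta> *\<^sub>R z = (1 / n) *\<^sub>R (p u - ((1 - u) * \<alpha> + u) *\<^sub>R z)"
      by (simp add: g_def n_def \<beta>_def scaleR_diff_right)
    ultimately have "norm (g u - \<beta> *\<^sub>R z) = (1 - u) * norm (x - \<alpha> *\<^sub>R z) / n"
      using u n by simp
    also have "\<dots> \<le> n * \<epsilon> / n"
      using u n close norm_ge_zero[of "x - \<alpha> *\<^sub>R z"]
      by (intro divide_right_mono mult_mono) auto
    also have "\<dots> = \<epsilon>"
      using n by simp
    finally have "dist (\<beta> *\<^sub>R z) (g u) \<le> \<epsilon>"
      by (simp add: dist_norm norm_minus_commute)
    moreover have "norm (g u) = 1"
      using n by (simp add: g_def n_def)
    ultimately show "g u \<in> line_thickening z \<epsilon> \<inter> sphere 0 1"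
      by (auto simp: line_thickening_def)
  qed
  moreover have "g 0 = x" "g 1 = z"
    using x z by (simp_all add: g_def p_def)
  ultimately show ?thesis
    by (metis connected_componentI connected_continuous_image connected_Icc atLeastAtMost_iff
        image_eqI order_refl zero_le_one)
qed

lemma components_sphere_line_thickening:
  fixes z :: "'a::real_normed_vector" and \<epsilon> :: real
  defines "A \<equiv> line_thickening z \<epsilon> \<inter> sphere 0 1"
  assumes z: "norm z = 1" and "\<epsilon> < 1"
  shows "components A \<subseteq> {connected_component_set A z, connected_component_set A (- z)}"
proof
  fix c
  assume "c \<in> components A"
  then obtain x where "x \<in> A" and c: "c = connected_component_set A x"
    by (auto simp: components_def)
  then obtain \<alpha> where x: "norm x = 1" and "dist (\<alpha> *\<^sub>R z) x \<le> \<epsilon>"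
    by (auto simp: A_def line_thickening_def)
  then have close: "norm (x - \<alpha> *\<^sub>R z) \<le> \<epsilon>"
    by (simp add: dist_norm norm_minus_commute)
  have "\<alpha> \<noteq> 0"
  proof
    assume "\<alpha> = 0"
    with close x \<open>\<epsilon> < 1\<close> show False
      by simp
  qed
  then consider "\<alpha> > 0" | "- \<alpha> > 0"
    by linarith
  then have "connected_component A x z \<or> connected_component A x (- z)"
  proof cases
    case 1
    then show ?thesis
      unfolding A_def using connected_component_to_pole[OF x z close \<open>\<epsilon> < 1\<close>] by blast
  next
    case 2
    have "norm (- z) = 1"
      using z by (rule trans[OF norm_minus_cancel])
    moreover have "norm (x - (- \<alpha>) *\<^sub>R (- z)) \<le> \<epsilon>"
      using close by simp
    ultimately have "connected_component (line_thickening (- z) \<epsilon> \<inter> sphere 0 1) x (- z)"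
      using connected_component_to_pole x \<open>\<epsilon> < 1\<close> 2 by blast
    then show ?thesis
      unfolding A_def line_thickening_uminus by blast
  qed
  then show "c \<in> {connected_component_set A z, connected_component_set A (- z)}"
    using c connected_component_eq by blast
qed

theorem lemma2p2:
  fixes z :: "'a::banach" and \<epsilon> :: real
  assumes "dim (UNIV :: 'a set) = 2"
    and "z \<in> sphere 0 1"
    and "0 \<le> \<epsilon>" and "\<epsilon> < 1"
  shows "finite (components ((\<Union>\<alpha>::real. cball (\<alpha> *\<^sub>R z) \<epsilon>) \<inter> sphere 0 1))
       \<and> card (components ((\<Union>\<alpha>::real. cball (\<alpha> *\<^sub>R z) \<epsilon>) \<inter> sphere 0 1)) \<le> 2"
proof -
  let ?A = "line_thickening z \<epsilon> \<inter> sphere 0 1"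
  let ?poles = "{connected_component_set ?A z, connected_component_set ?A (- z)}"
  have "components ?A \<subseteq> ?poles"
    using components_sphere_line_thickening assms(2,4) by simp
  moreover have "card ?poles \<le> 2"
    by (simp add: card_insert_if)
  ultimately have "finite (components ?A) \<and> card (components ?A) \<le> 2"
    using card_mono[of ?poles] finite_subset[of _ ?poles] by (meson finite.emptyI finite.insertI le_trans)
  then show ?thesis
    unfolding line_thickening_def .
qed

end
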